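(* Let $\Gamma$ be a group and $\alpha<\mathrm{Lit}(\Gamma)$. Then there exist finite symmetric sets $S\subseteq\Gamma$ of arbitrarily large cardinality such that $\mathrm{Cay}(\Gamma,S)$ is $\sqrt[\alpha]{|S|}$-colourable.
   Context: $T_1(\Gamma)$ is the space of all $f\colon\Gamma\to\mathbf{C}$ for which there exist $f_1,f_2\colon\Gamma\times\Gamma\to\mathbf{C}$ with $f(x^{-1}y)=f_1(x,y)+f_2(x,y)$ for all $x,y$, $\sup_x\sum_y|f_1(x,y)|<\infty$, $\sup_y\sum_x|f_2(x,y)|<\infty$; $\mathrm{Lit}(\Gamma)=\inf\{p>0:T_1(\Gamma)\subseteq\ell^p(\Gamma)\}$. $\mathrm{Cay}(\Gamma,S)$ is the graph with vertex set $\Gamma$ and an edge between $g$ and $gs$ for each $s\in S$. For a real number $t$, a graph is called $t$-colourable if its vertices can be coloured with $\lfloor t\rfloor$ colours so that adjacent vertices get different colours. *)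

theory Defs
  imports "HOL-Analysis.Analysis" "HOL-Algebra.Group"
begin

definition row_bounded :: "('a, 'b) monoid_scheme \<Rightarrow> ('a \<Rightarrow> 'a \<Rightarrow> complex) \<Rightarrow> bool" where
  "row_bounded G k \<longleftrightarrow> (\<exists>B::real. \<forall>x\<in>carrier G.
      ((\<lambda>y. norm (k x y)) summable_on (carrier G)) \<and> infsum (\<lambda>y. norm (k x y)) (carrier G) \<le> B)"

definition col_bounded :: "('a, 'b) monoid_scheme \<Rightarrow> ('a \<Rightarrow> 'a \<Rightarrow> complex) \<Rightarrow> bool" where
  "col_bounded G k \<longleftrightarrow> (\<exists>B::real. \<forall>y\<in>carrier G.
      ((\<lambda>x. norm (k x y)) summable_on (carrier G)) \<and> infsum (\<lambda>x. norm (k x y)) (carrier G) \<le> B)"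

definition T1 :: "('a, 'b) monoid_scheme \<Rightarrow> ('a \<Rightarrow> complex) set" where
  "T1 G = {f. \<exists>f1 f2. (\<forall>x\<in>carrier G. \<forall>y\<in>carrier G.
              f (inv\<^bsub>G\<^esub> x \<otimes>\<^bsub>G\<^esub> y) = f1 x y + f2 x y)
            \<and> row_bounded G f1 \<and> col_bounded G f2}"

definition lp_space :: "('a, 'b) monoid_scheme \<Rightarrow> real \<Rightarrow> ('a \<Rightarrow> complex) set" where
  "lp_space G p = {f. ((\<lambda>x. norm (f x) powr p) summable_on (carrier G))}"

text \<open>Littlewood exponent, valued in the extended reals (inf of empty set = infinity).\<close>
definition Lit :: "('a, 'b) monoid_scheme \<Rightarrow> ereal" where
  "Lit G = Inf {ereal p | p. p > 0 \<and> T1 G \<subseteq> lp_space G p}"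

definition cay_adj :: "('a, 'b) monoid_scheme \<Rightarrow> 'a set \<Rightarrow> 'a \<Rightarrow> 'a \<Rightarrow> bool" where
  "cay_adj G S g h \<longleftrightarrow> g \<in> carrier G \<and> h \<in> carrier G \<and> (\<exists>s\<in>S. h = g \<otimes>\<^bsub>G\<^esub> s)"

definition cay_colourable :: "('a, 'b) monoid_scheme \<Rightarrow> 'a set \<Rightarrow> real \<Rightarrow> bool" where
  "cay_colourable G S t \<longleftrightarrow> (\<exists>c :: 'a \<Rightarrow> nat.
      (\<forall>g\<in>carrier G. c g < nat \<lfloor>t\<rfloor>) \<and>
      (\<forall>g h. cay_adj G S g h \<longrightarrow> c g \<noteq> c h))"

definition symmetric_set :: "('a, 'b) monoid_scheme \<Rightarrow> 'a set \<Rightarrow> bool" where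
  "symmetric_set G S \<longleftrightarrow> S \<subseteq> carrier G \<and> (\<forall>s\<in>S. inv\<^bsub>G\<^esub> s \<in> S)"

end

theory Submission
  imports Defs
begin

(* Pick alpha < beta < Lit(Gamma) and f in T_1(Gamma) outside l^beta, with
   f(x^-1 y) = f1(x,y) + f2(x,y).  Since f is bounded, a dyadic decomposition of its values shows
   that f is not of weak type l^alpha: for every K there are eps > 0 and a finite set F with
   |f| >= eps on F and |F| > K eps^-alpha.  Put S = (F u F^-1) - {1}.  For an edge {g, g s} of
   Cay(Gamma, S) one of f1(g, g s), f2(g, g s), f1(g s, g), f2(g s, g) has modulus at least eps/2,
   so orienting every edge along such an entry gives out-degrees at most d = 2 M / eps by the row
   and column bounds M of f1 and f2.  A graph admitting an orientation of out-degree at most d is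
   (2d+1)-colourable (degeneracy for finite graphs, compactness in general), and the size of F
   makes 2d+1 <= |S|^(1/alpha). *)

lemma dyadic_powr_identity:
  fixes M \<alpha> \<beta> :: real
  assumes "0 < M"
  shows "(M / 2 ^ Suc k) powr (-\<alpha>) * (M / 2 ^ k) powr \<beta>
         = 2 powr \<alpha> * M powr (\<beta> - \<alpha>) * (2 powr (\<alpha> - \<beta>)) ^ k"
proof -
  have pow2: "(2::real) ^ n = 2 powr real n" for n by (simp add: powr_realpow)
  show ?thesis
    using assms unfolding pow2
    by (simp add: powr_divide powr_powr powr_power powr_mult powr_diff powr_minus_divide
        powr_add field_simps)
qed

lemma exists_dyadic_shell:
  fixes y M :: real
  assumes "0 < y" "y \<le> M"
  shows "\<exists>k. M / 2 ^ Suc k < y \<and> y \<le> M / 2 ^ k"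
proof -
  define k where "k = nat \<lfloor>log 2 (M / y)\<rfloor>"
  have "1 \<le> M / y" using assms by simp
  then have "2 powr real k \<le> M / y \<and> M / y < 2 powr (real k + 1)"
    using floor_log_eq_powr_iff[of "M / y" 2 "int k"] assms by (simp add: k_def)
  then have "2 ^ k \<le> M / y \<and> M / y < 2 ^ Suc k"
    by (simp add: powr_realpow[symmetric] powr_add)
  then show ?thesis using assms by (auto simp: field_simps)
qed

lemma card_superlevel_set_le_infsum:
  fixes g :: "'x \<Rightarrow> real"
  assumes g: "g summable_on A" "\<And>y. y \<in> A \<Longrightarrow> 0 \<le> g y" and "0 < \<delta>"
  shows "finite {y\<in>A. \<delta> \<le> g y}" and "real (card {y\<in>A. \<delta> \<le> g y}) * \<delta> \<le> infsum g A"
proof -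
  have bound: "real (card T) * \<delta> \<le> infsum g A" if "finite T" "T \<subseteq> {y\<in>A. \<delta> \<le> g y}" for T
  proof -
    have "real (card T) * \<delta> \<le> (\<Sum>y\<in>T. g y)"
      using sum_mono[of T "\<lambda>_. \<delta>" g] that by auto
    also have "\<dots> \<le> infsum g A"
      using finite_sum_le_infsum[OF g(1)] g(2) that by auto
    finally show ?thesis .
  qed
  show finite: "finite {y\<in>A. \<delta> \<le> g y}"
  proof (rule ccontr)
    assume "infinite {y\<in>A. \<delta> \<le> g y}"
    then obtain T where "finite T" "card T = nat \<lceil>infsum g A / \<delta>\<rceil> + 1" "T \<subseteq> {y\<in>A. \<delta> \<le> g y}"
      using infinite_arbitrarily_large by blast
    with bound have "real (nat \<lceil>infsum g A / \<delta>\<rceil> + 1) * \<delta> \<le> infsum g A" by metis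
    moreover have "infsum g A / \<delta> < real (nat \<lceil>infsum g A / \<delta>\<rceil> + 1)" by linarith
    ultimately show False using \<open>0 < \<delta>\<close> by (simp add: field_simps)
  qed
  show "real (card {y\<in>A. \<delta> \<le> g y}) * \<delta> \<le> infsum g A"
    using bound[OF finite] by simp
qed

lemma summable_powr_of_weak_type_bound:
  fixes a :: "'x \<Rightarrow> real"
  assumes nonneg: "\<And>x. x \<in> A \<Longrightarrow> 0 \<le> a x" and bounded: "\<And>x. x \<in> A \<Longrightarrow> a x \<le> M"
    and "0 < M" "0 < \<alpha>" "\<alpha> < \<beta>"
    and weak: "\<And>\<epsilon> F. 0 < \<epsilon> \<Longrightarrow> finite F \<Longrightarrow> F \<subseteq> A \<Longrightarrow> (\<forall>x\<in>F. \<epsilon> \<le> a x) \<Longrightarrow>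
                 real (card F) \<le> K * \<epsilon> powr (-\<alpha>)"
  shows "(\<lambda>x. a x powr \<beta>) summable_on A"
proof -
  have "0 \<le> K" using weak[of 1 "{}"] by simp
  define q :: real where "q = 2 powr (\<alpha> - \<beta>)"
  define t where "t k = K * (2 powr \<alpha> * M powr (\<beta> - \<alpha>) * q ^ k)" for k
  have "q < 1" using \<open>\<alpha> < \<beta>\<close> by (simp add: q_def powr_less_one)
  then have "summable t" unfolding t_def
    by (intro summable_mult summable_geometric) (simp add: q_def)
  have t_nonneg: "0 \<le> t k" for k using \<open>0 \<le> K\<close> by (simp add: t_def q_def)
  obtain shell where shell:
    "\<And>x. x \<in> A \<Longrightarrow> 0 < a x \<Longrightarrow> M / 2 ^ Suc (shell x) < a x \<and> a x \<le> M / 2 ^ shell x"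
  proof -
    have "\<forall>x. \<exists>k. x \<in> A \<and> 0 < a x \<longrightarrow> M / 2 ^ Suc k < a x \<and> a x \<le> M / 2 ^ k"
      using exists_dyadic_shell bounded by blast
    then show ?thesis using that by metis
  qed
  have shell_sum: "(\<Sum>x\<in>{x\<in>F. 0 < a x \<and> shell x = k}. a x powr \<beta>) \<le> t k"
    if F: "finite F" "F \<subseteq> A" for F k
  proof -
    define L where "L = {x\<in>F. 0 < a x \<and> shell x = k}"
    have L: "finite L" "L \<subseteq> A" "\<And>x. x \<in> L \<Longrightarrow> M / 2 ^ Suc k < a x \<and> a x \<le> M / 2 ^ k"
      using F shell by (auto simp: L_def)
    have "(\<Sum>x\<in>L. a x powr \<beta>) \<le> real (card L) * (M / 2 ^ k) powr \<beta>"
    proof (rule sum_bounded_above)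
      fix x assume "x \<in> L"
      with L(2,3) nonneg have "0 \<le> a x" "a x \<le> M / 2 ^ k" by auto
      then show "a x powr \<beta> \<le> (M / 2 ^ k) powr \<beta>"
        using \<open>0 < \<alpha>\<close> \<open>\<alpha> < \<beta>\<close> by (intro powr_mono2) auto
    qed
    also have "\<dots> \<le> K * (M / 2 ^ Suc k) powr (-\<alpha>) * (M / 2 ^ k) powr \<beta>"
      using weak[of "M / 2 ^ Suc k" L] L \<open>0 < M\<close> by (intro mult_right_mono) (auto simp: less_imp_le)
    also have "\<dots> = t k"
      using dyadic_powr_identity[OF \<open>0 < M\<close>] by (simp add: t_def q_def mult.assoc)
    finally show ?thesis unfolding L_def .
  qed
  have "(\<Sum>x\<in>F. a x powr \<beta>) \<le> suminf t" if F: "finite F" "F \<subseteq> A" for F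
  proof -
    obtain n where n: "\<forall>x\<in>F. shell x < n"
      using finite_nat_bounded[of "shell ` F"] F(1) by auto
    have "(\<Sum>x\<in>F. a x powr \<beta>) = (\<Sum>x\<in>{x\<in>F. 0 < a x}. a x powr \<beta>)"
      using F nonneg by (intro sum.mono_neutral_right) (auto simp: less_le)
    also have "\<dots> = (\<Sum>k<n. \<Sum>x\<in>{x\<in>F. 0 < a x \<and> shell x = k}. a x powr \<beta>)"
      using F(1) n by (subst sum.group[symmetric, of _ "{..<n}" shell]) (auto intro!: sum.cong)
    also have "\<dots> \<le> (\<Sum>k<n. t k)"
      using shell_sum[OF F] by (intro sum_mono)
    also have "\<dots> \<le> suminf t"
      using \<open>summable t\<close> t_nonneg by (intro sum_le_suminf) auto
    finally show ?thesis .
  qed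
  then show ?thesis
    by (intro nonneg_bdd_above_summable_on bdd_aboveI) auto
qed

lemma exists_large_superlevel_set:
  fixes a :: "'x \<Rightarrow> real"
  assumes nonneg: "\<And>x. x \<in> A \<Longrightarrow> 0 \<le> a x" and bounded: "\<And>x. x \<in> A \<Longrightarrow> a x \<le> M"
    and "0 < M" "0 < \<alpha>" "\<alpha> < \<beta>" "0 \<le> L"
    and not_summable: "\<not> (\<lambda>x. a x powr \<beta>) summable_on A"
  obtains \<epsilon> F where "0 < \<epsilon>" "\<epsilon> \<le> M" "finite F" "F \<subseteq> A" "\<forall>x\<in>F. \<epsilon> \<le> a x"
    "real n + (L / \<epsilon>) powr \<alpha> < real (card F)"
proof -
  define K where "K = real n * M powr \<alpha> + L powr \<alpha>"
  have "\<not> (\<forall>\<epsilon> F. 0 < \<epsilon> \<longrightarrow> finite F \<longrightarrow> F \<subseteq> A \<longrightarrow> (\<forall>x\<in>F. \<epsilon> \<le> a x) \<longrightarrow>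
      real (card F) \<le> K * \<epsilon> powr (-\<alpha>))"
    using summable_powr_of_weak_type_bound[of A a M \<alpha> \<beta> K] nonneg bounded assms(3-5) not_summable
    by blast
  then obtain \<epsilon> F where F: "0 < \<epsilon>" "finite F" "F \<subseteq> A" "\<forall>x\<in>F. \<epsilon> \<le> a x"
    and card_F: "K * \<epsilon> powr (-\<alpha>) < real (card F)"
    by (auto simp: not_le)
  have "0 \<le> K * \<epsilon> powr (-\<alpha>)" by (simp add: K_def)
  with card_F obtain x where "x \<in> F" by fastforce
  with F bounded have "\<epsilon> \<le> M" by force
  have "K * \<epsilon> powr (-\<alpha>) = real n * (M / \<epsilon>) powr \<alpha> + (L / \<epsilon>) powr \<alpha>"
    using \<open>0 < M\<close> \<open>0 \<le> L\<close> \<open>0 < \<epsilon>\<close>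
    by (simp add: K_def powr_divide powr_minus_divide add_divide_distrib)
  moreover have "1 \<le> (M / \<epsilon>) powr \<alpha>"
    using \<open>\<epsilon> \<le> M\<close> \<open>0 < \<epsilon>\<close> \<open>0 < \<alpha>\<close> by (simp add: ge_one_powr_ge_zero)
  ultimately have "real n + (L / \<epsilon>) powr \<alpha> < real (card F)"
    using card_F mult_left_mono[of 1 "(M / \<epsilon>) powr \<alpha>" "real n"] by simp
  with F \<open>\<epsilon> \<le> M\<close> show ?thesis using that by blast
qed

definition proper_colouring :: "('v \<Rightarrow> 'v \<Rightarrow> bool) \<Rightarrow> nat \<Rightarrow> 'v set \<Rightarrow> ('v \<Rightarrow> nat) \<Rightarrow> bool" where
  "proper_colouring E k V c \<longleftrightarrow> (\<forall>v\<in>V. c v < k) \<and> (\<forall>v\<in>V. \<forall>w\<in>V. E v w \<longrightarrow> c v \<noteq> c w)"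

lemma sum_in_degree_le:
  fixes out :: "'v \<Rightarrow> 'v set"
  assumes W: "finite W" and out: "\<And>v. finite (out v)" "\<And>v. card (out v) \<le> d"
  shows "(\<Sum>v\<in>W. card {w\<in>W. v \<in> out w}) \<le> card W * d"
proof -
  have "(\<Sum>v\<in>W. card {w\<in>W. v \<in> out w}) = (\<Sum>v\<in>W. \<Sum>w\<in>W. of_bool (v \<in> out w))"
    using W by (simp add: Int_def)
  also have "\<dots> = (\<Sum>w\<in>W. card (W \<inter> out w))"
    using W by (subst sum.swap) (simp add: Int_def)
  also have "\<dots> \<le> (\<Sum>w\<in>W. d)"
    by (intro sum_mono order.trans[OF card_mono out(2)]) (auto simp: out(1))
  finally show ?thesis by simp
qed

lemma exists_vertex_small_degree:
  fixes out :: "'v \<Rightarrow> 'v set"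
  assumes W: "finite W" "W \<noteq> {}" and out: "\<And>v. finite (out v)" "\<And>v. card (out v) \<le> d"
  shows "\<exists>v\<in>W. card {w\<in>W. w \<in> out v \<or> v \<in> out w} \<le> 2 * d"
proof (rule ccontr)
  assume "\<not> ?thesis"
  then have "card W * (2 * d + 1) \<le> (\<Sum>v\<in>W. card {w\<in>W. w \<in> out v \<or> v \<in> out w})"
    using sum_mono[of W "\<lambda>_. 2 * d + 1" "\<lambda>v. card {w\<in>W. w \<in> out v \<or> v \<in> out w}"]
    by (simp add: not_le Suc_le_eq)
  also have "\<dots> \<le> (\<Sum>v\<in>W. card (W \<inter> out v) + card {w\<in>W. v \<in> out w})"
  proof (rule sum_mono)
    fix v
    have "{w\<in>W. w \<in> out v \<or> v \<in> out w} = (W \<inter> out v) \<union> {w\<in>W. v \<in> out w}" by blast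
    then show "card {w\<in>W. w \<in> out v \<or> v \<in> out w} \<le> card (W \<inter> out v) + card {w\<in>W. v \<in> out w}"
      using card_Un_le by metis
  qed
  also have "\<dots> \<le> card W * d + card W * d"
  proof -
    have "card (W \<inter> out v) \<le> d" for v
      using card_mono[OF out(1) Int_lower2] out(2) order.trans by blast
    then have "(\<Sum>v\<in>W. card (W \<inter> out v)) \<le> card W * d"
      using sum_mono[of W _ "\<lambda>_. d"] by simp
    then show ?thesis
      using sum_in_degree_le[of W out d] W(1) out by (simp add: sum.distrib)
  qed
  finally show False using W by (simp add: card_gt_0_iff)
qed

lemma finite_colouring_bounded_outdegree:
  fixes E :: "'v \<Rightarrow> 'v \<Rightarrow> bool" and out :: "'v \<Rightarrow> 'v set"
  assumes out: "\<And>v. finite (out v)" "\<And>v. card (out v) \<le> d"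
    and E_out: "\<And>v w. E v w \<Longrightarrow> w \<in> out v \<or> v \<in> out w" and irrefl: "\<And>v. \<not> E v v"
    and W: "finite W"
  shows "\<exists>c. proper_colouring E (2 * d + 1) W c"
  using W
proof (induction W rule: finite_psubset_induct)
  case (psubset W)
  show ?case
  proof (cases "W = {}")
    case True
    then show ?thesis by (simp add: proper_colouring_def)
  next
    case False
    define nbhd where "nbhd v = {w\<in>W. w \<in> out v \<or> v \<in> out w}" for v
    obtain v where v: "v \<in> W" "card (nbhd v) \<le> 2 * d"
      using exists_vertex_small_degree[OF psubset.hyps(1) False, of out d] out
      unfolding nbhd_def by blast
    obtain c where c: "proper_colouring E (2 * d + 1) (W - {v}) c"
      using psubset.IH[of "W - {v}"] v(1) by blast
    have "card (c ` nbhd v) < card {..<2 * d + 1}"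
      using card_image_le[of "nbhd v" c] psubset.hyps(1) v(2) by (simp add: nbhd_def)
    then have "\<not> {..<2 * d + 1} \<subseteq> c ` nbhd v"
      using card_mono[of "c ` nbhd v" "{..<2 * d + 1}"] psubset.hyps(1) by (auto simp: nbhd_def)
    then obtain a where a: "a < 2 * d + 1" "a \<notin> c ` nbhd v" by blast
    have "proper_colouring E (2 * d + 1) W (c(v := a))"
      unfolding proper_colouring_def
    proof (intro conjI ballI impI)
      show "(c(v := a)) u < 2 * d + 1" if "u \<in> W" for u
        using that a(1) c by (auto simp: proper_colouring_def)
      fix u w assume uw: "u \<in> W" "w \<in> W" "E u w"
      then have "u \<noteq> w" using irrefl by blast
      have "u \<in> nbhd w" "w \<in> nbhd u"
        using uw E_out unfolding nbhd_def by auto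
      then show "(c(v := a)) u \<noteq> (c(v := a)) w"
        using \<open>u \<noteq> w\<close> a(2) c uw by (auto simp: proper_colouring_def)
    qed
    then show ?thesis by blast
  qed
qed

lemma colouring_of_finite_colourings:
  fixes E :: "'v \<Rightarrow> 'v \<Rightarrow> bool"
  assumes finite_colourable: "\<And>W. finite W \<Longrightarrow> W \<subseteq> V \<Longrightarrow> \<exists>c. proper_colouring E k W c"
  shows "\<exists>c. proper_colouring E k V c"
proof -
  \<comment> \<open>Tychonoff: the colourings form the compact space {..<k}^V, and the colourings that are
    proper on a given edge form closed sets with the finite intersection property.\<close>
  define X where "X = product_topology (\<lambda>_. discrete_topology {..<k}) V"
  have X: "topspace X = (\<Pi>\<^sub>E v\<in>V. {..<k})" "compact_space X"
    by (simp_all add: X_def compact_space_product_topology compact_space_discrete_topology)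
  have k_pos: "0 < k" if "v \<in> V" for v
    using finite_colourable[of "{v}"] that by (auto simp: proper_colouring_def)
  define apart where "apart = (\<lambda>(v, w). {c \<in> topspace X. c v \<noteq> c w})"
  define edges where "edges = {(v, w). v \<in> V \<and> w \<in> V \<and> E v w}"
  have closed_apart: "closedin X (apart e)" if edge: "e \<in> edges" for e
  proof -
    obtain v w where e: "e = (v, w)" "v \<in> V" "w \<in> V" using edge by (cases e) (auto simp: edges_def)
    have "continuous_map X (discrete_topology ({..<k} \<times> {..<k})) (\<lambda>c. (c v, c w))"
      unfolding prod_topology_discrete_topology X_def using e
      by (intro continuous_map_pairedI continuous_map_product_projection)
    then have "closedin X {c \<in> topspace X. (c v, c w) \<in> {p \<in> {..<k} \<times> {..<k}. fst p \<noteq> snd p}}"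
      by (rule closedin_continuous_map_preimage) simp
    moreover have "{c \<in> topspace X. (c v, c w) \<in> {p \<in> {..<k} \<times> {..<k}. fst p \<noteq> snd p}} = apart e"
      using e by (auto simp: apart_def X(1))
    ultimately show ?thesis by simp
  qed
  have "\<Inter> (insert (topspace X) (apart ` edges)) \<noteq> {}"
  proof (rule X(2)[unfolded compact_space_fip, rule_format], safe)
    fix \<F> assume \<F>: "finite \<F>" "\<F> \<subseteq> insert (topspace X) (apart ` edges)" "\<Inter> \<F> = {}"
    obtain es where es: "es \<subseteq> edges" "finite es" "\<F> - {topspace X} = apart ` es"
      using finite_subset_image[of "\<F> - {topspace X}" apart edges] \<F>(1,2) by blast
    define W where "W = fst ` es \<union> snd ` es"
    have W: "finite W" "W \<subseteq> V" using es by (auto simp: W_def edges_def)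
    then obtain c where c: "proper_colouring E k W c" using finite_colourable by blast
    define c' where "c' = restrict (\<lambda>v. if v \<in> W then c v else 0) V"
    have "c' \<in> topspace X"
      using c W(2) k_pos by (auto simp: X(1) c'_def proper_colouring_def)
    moreover have "c' \<in> apart e" if "e \<in> es" for e
    proof -
      obtain v w where e: "e = (v, w)" by (cases e)
      with that es(1) have "v \<in> W" "w \<in> W" "E v w" "v \<in> V" "w \<in> V"
        by (force simp: W_def edges_def)+
      with c have "c' v \<noteq> c' w" by (simp add: c'_def proper_colouring_def)
      with \<open>c' \<in> topspace X\<close> show ?thesis by (simp add: apart_def e)
    qed
    ultimately have "c' \<in> \<Inter> \<F>" using es(3) by blast
    with \<F>(3) show False by blast
  qed (use closed_apart in auto)
  then obtain c where "c \<in> topspace X" "\<And>e. e \<in> edges \<Longrightarrow> c \<in> apart e" by blast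
  then have "proper_colouring E k V c"
    unfolding proper_colouring_def X(1) by (auto simp: apart_def edges_def)
  then show ?thesis by blast
qed

lemma colouring_bounded_outdegree:
  fixes E :: "'v \<Rightarrow> 'v \<Rightarrow> bool" and out :: "'v \<Rightarrow> 'v set"
  assumes "\<And>v. finite (out v)" "\<And>v. card (out v) \<le> d"
    and "\<And>v w. E v w \<Longrightarrow> w \<in> out v \<or> v \<in> out w" and "\<And>v. \<not> E v v"
  shows "\<exists>c. proper_colouring E (2 * d + 1) V c"
proof (rule colouring_of_finite_colourings)
  show "\<exists>c. proper_colouring E (2 * d + 1) W c" if "finite W" for W
    by (rule finite_colouring_bounded_outdegree[OF assms that])
qed

lemma cay_colourable_mono:
  assumes "cay_colourable G S t" "t \<le> t'"
  shows "cay_colourable G S t'"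
proof -
  have "nat \<lfloor>t\<rfloor> \<le> nat \<lfloor>t'\<rfloor>" using assms(2) by (intro nat_mono floor_mono)
  with assms(1) show ?thesis unfolding cay_colourable_def by (auto intro: order_less_le_trans)
qed

lemma (in group) cay_colourable_of_bounded_outdegree:
  fixes out :: "'a \<Rightarrow> 'a set"
  assumes "\<one> \<notin> S" "S \<subseteq> carrier G"
    and out: "\<And>v. v \<in> carrier G \<Longrightarrow> finite (out v)" "\<And>v. v \<in> carrier G \<Longrightarrow> card (out v) \<le> d"
    and edge: "\<And>g s. g \<in> carrier G \<Longrightarrow> s \<in> S \<Longrightarrow> g \<otimes> s \<in> out g \<or> g \<in> out (g \<otimes> s)"
  shows "cay_colourable G S (real (2 * d + 1))"
proof -
  define out' where "out' v = (if v \<in> carrier G then out v else {})" for v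
  have no_loop: "\<not> cay_adj G S v v" for v
    using assms(1,2) r_cancel_one' by (fastforce simp: cay_adj_def)
  have "\<exists>c. proper_colouring (cay_adj G S) (2 * d + 1) (carrier G) c"
    by (rule colouring_bounded_outdegree[of out' d])
       (use out edge no_loop in \<open>auto simp: out'_def cay_adj_def\<close>)
  then show ?thesis
    unfolding cay_colourable_def proper_colouring_def cay_adj_def floor_of_nat nat_int by blast
qed

lemma (in group) symmetric_set_of_finite_subset:
  assumes "finite F" "F \<subseteq> carrier G"
  obtains S where "finite S" "symmetric_set G S" "\<one> \<notin> S" "card F \<le> card S + 1"
    "\<And>s. s \<in> S \<Longrightarrow> s \<in> F \<or> inv s \<in> F"
proof
  define S where "S = (F \<union> m_inv G ` F) - {\<one>}"
  show "finite S" "\<one> \<notin> S" using assms(1) by (auto simp: S_def)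
  show "symmetric_set G S" using assms(2) by (auto simp: S_def symmetric_set_def)
  show "s \<in> F \<or> inv s \<in> F" if "s \<in> S" for s using that assms(2) by (auto simp: S_def)
  have "card F \<le> card (insert \<one> S)"
    using assms(1) by (intro card_mono) (auto simp: S_def)
  also have "\<dots> \<le> card S + 1" by (simp add: card_insert_le_m1 card_insert_if)
  finally show "card F \<le> card S + 1" .
qed

locale T1_decomposition = group G for G :: "('a, 'b) monoid_scheme" (structure) +
  fixes f :: "'a \<Rightarrow> complex" and f1 f2 :: "'a \<Rightarrow> 'a \<Rightarrow> complex" and B1 B2 :: real
  assumes decomp: "x \<in> carrier G \<Longrightarrow> y \<in> carrier G \<Longrightarrow> f (inv x \<otimes> y) = f1 x y + f2 x y"
    and row_summable: "x \<in> carrier G \<Longrightarrow> (\<lambda>y. norm (f1 x y)) summable_on carrier G"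
    and row_bound: "x \<in> carrier G \<Longrightarrow> infsum (\<lambda>y. norm (f1 x y)) (carrier G) \<le> B1"
    and col_summable: "y \<in> carrier G \<Longrightarrow> (\<lambda>x. norm (f2 x y)) summable_on carrier G"
    and col_bound: "y \<in> carrier G \<Longrightarrow> infsum (\<lambda>x. norm (f2 x y)) (carrier G) \<le> B2"

lemma T1_decomposition_exists:
  assumes "group G" "f \<in> T1 G"
  shows "\<exists>f1 f2 B1 B2. T1_decomposition G f f1 f2 B1 B2"
  using assms
  unfolding T1_def row_bounded_def col_bounded_def T1_decomposition_def T1_decomposition_axioms_def
  by blast

context T1_decomposition
begin

lemma norm_le_bounds:
  assumes "s \<in> carrier G"
  shows "norm (f s) \<le> B1 + B2"
proof -
  have "norm (f1 \<one> s) \<le> infsum (\<lambda>y. norm (f1 \<one> y)) (carrier G)"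
    using finite_sum_le_infsum[OF row_summable[OF one_closed], of "{s}"] assms by simp
  moreover have "norm (f2 \<one> s) \<le> infsum (\<lambda>x. norm (f2 x s)) (carrier G)"
    using finite_sum_le_infsum[OF col_summable[OF assms], of "{\<one>}"] by simp
  moreover have "f s = f1 \<one> s + f2 \<one> s" using decomp[of \<one> s] assms by simp
  ultimately show ?thesis
    using norm_triangle_ineq[of "f1 \<one> s" "f2 \<one> s"] row_bound[of \<one>] col_bound[of s] assms
    by simp
qed

lemma bounds_nonneg: "0 \<le> B1 + B2"
  using order.trans[OF norm_ge_zero norm_le_bounds[OF one_closed]] .

definition heavy :: "real \<Rightarrow> 'a \<Rightarrow> 'a set" where
  "heavy \<delta> v = {w \<in> carrier G. \<delta> \<le> norm (f1 v w)} \<union> {w \<in> carrier G. \<delta> \<le> norm (f2 w v)}"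

lemma finite_heavy_card_le:
  assumes "v \<in> carrier G" "0 < \<delta>"
  shows "finite (heavy \<delta> v)" and "real (card (heavy \<delta> v)) * \<delta> \<le> B1 + B2"
proof -
  note row = card_superlevel_set_le_infsum[OF row_summable[OF assms(1)] _ assms(2)]
  note col = card_superlevel_set_le_infsum[OF col_summable[OF assms(1)] _ assms(2)]
  show "finite (heavy \<delta> v)" using row(1) col(1) by (simp add: heavy_def)
  let ?R = "{w \<in> carrier G. \<delta> \<le> norm (f1 v w)}" and ?C = "{w \<in> carrier G. \<delta> \<le> norm (f2 w v)}"
  have "card (heavy \<delta> v) \<le> card ?R + card ?C"
    unfolding heavy_def by (rule card_Un_le)
  then have "real (card (heavy \<delta> v)) * \<delta> \<le> real (card ?R) * \<delta> + real (card ?C) * \<delta>"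
    using assms(2) by (simp flip: distrib_right)
  also have "\<dots> \<le> B1 + B2"
    using row(2) col(2) row_bound[OF assms(1)] col_bound[OF assms(1)] by simp
  finally show "real (card (heavy \<delta> v)) * \<delta> \<le> B1 + B2" .
qed

lemma heavy_if_large:
  assumes "x \<in> carrier G" "y \<in> carrier G" "2 * \<delta> \<le> norm (f (inv x \<otimes> y))"
  shows "y \<in> heavy \<delta> x \<or> x \<in> heavy \<delta> y"
  using assms decomp[of x y] norm_triangle_ineq[of "f1 x y" "f2 x y"]
  by (auto simp: heavy_def)

end

lemma (in T1_decomposition) cay_colourable_of_large_values:
  assumes "0 < \<epsilon>" "S \<subseteq> carrier G" "\<one> \<notin> S"
    and large: "\<And>s. s \<in> S \<Longrightarrow> \<epsilon> \<le> norm (f s) \<or> \<epsilon> \<le> norm (f (inv s))"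
  shows "cay_colourable G S (4 * (B1 + B2) / \<epsilon> + 1)"
proof -
  define d where "d = nat \<lfloor>2 * (B1 + B2) / \<epsilon>\<rfloor>"
  have "real d \<le> 2 * (B1 + B2) / \<epsilon>"
    using bounds_nonneg \<open>0 < \<epsilon>\<close> unfolding d_def by simp
  have "card (heavy (\<epsilon> / 2) v) \<le> d" if "v \<in> carrier G" for v
  proof -
    have "real (card (heavy (\<epsilon> / 2) v)) \<le> 2 * (B1 + B2) / \<epsilon>"
      using finite_heavy_card_le(2)[OF that, of "\<epsilon> / 2"] \<open>0 < \<epsilon>\<close> by (simp add: field_simps)
    then show ?thesis unfolding d_def by linarith
  qed
  moreover have "g \<otimes> s \<in> heavy (\<epsilon> / 2) g \<or> g \<in> heavy (\<epsilon> / 2) (g \<otimes> s)"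
    if "g \<in> carrier G" "s \<in> S" for g s
  proof -
    have "s \<in> carrier G" using that assms(2) by blast
    then have "inv g \<otimes> (g \<otimes> s) = s" "inv (g \<otimes> s) \<otimes> g = inv s"
      using that(1) by (simp_all add: m_assoc[symmetric] inv_mult_group) (simp add: m_assoc)
    with large[OF that(2)] that(1) \<open>s \<in> carrier G\<close> show ?thesis
      using heavy_if_large[of g "g \<otimes> s" "\<epsilon> / 2"] heavy_if_large[of "g \<otimes> s" g "\<epsilon> / 2"] by auto
  qed
  ultimately have "cay_colourable G S (real (2 * d + 1))"
    using cay_colourable_of_bounded_outdegree[of S "heavy (\<epsilon> / 2)" d] finite_heavy_card_le(1)
      assms(1-3) by auto
  moreover have "real (2 * d + 1) \<le> 4 * (B1 + B2) / \<epsilon> + 1"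
    using \<open>real d \<le> 2 * (B1 + B2) / \<epsilon>\<close> \<open>0 < \<epsilon>\<close> by (simp add: field_simps)
  ultimately show ?thesis by (rule cay_colourable_mono)
qed

lemma (in T1_decomposition) colourable_symmetric_set_of_large_values:
  assumes "0 < \<epsilon>" "finite F" "F \<subseteq> carrier G" "\<forall>x\<in>F. \<epsilon> \<le> norm (f x)"
  obtains S where "finite S" "symmetric_set G S" "card F \<le> card S + 1"
    "cay_colourable G S (4 * (B1 + B2) / \<epsilon> + 1)"
proof -
  obtain S where S: "finite S" "symmetric_set G S" "\<one> \<notin> S" "card F \<le> card S + 1"
    and S_F: "\<And>s. s \<in> S \<Longrightarrow> s \<in> F \<or> inv s \<in> F"
    using symmetric_set_of_finite_subset[OF assms(2,3)] by blast
  have "cay_colourable G S (4 * (B1 + B2) / \<epsilon> + 1)"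
  proof (rule cay_colourable_of_large_values[OF \<open>0 < \<epsilon>\<close> _ \<open>\<one> \<notin> S\<close>])
    show "S \<subseteq> carrier G" using S(2) by (simp add: symmetric_set_def)
    show "\<epsilon> \<le> norm (f s) \<or> \<epsilon> \<le> norm (f (inv s))" if "s \<in> S" for s
      using S_F[OF that] assms(4) by blast
  qed
  with S show ?thesis using that by blast
qed

lemma cay_colourable_powr:
  assumes "cay_colourable G S t" "0 \<le> t" "0 < \<alpha>" "t powr \<alpha> \<le> real (card S)"
  shows "cay_colourable G S (real (card S) powr (1 / \<alpha>))"
proof -
  have "t = (t powr \<alpha>) powr (1 / \<alpha>)" using assms(2,3) by (simp add: powr_powr)
  also have "\<dots> \<le> real (card S) powr (1 / \<alpha>)" using assms(3,4) by (intro powr_mono2) auto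
  finally show ?thesis using assms(1) cay_colourable_mono by blast
qed

lemma T1_not_subset_lp_space:
  assumes "0 < \<beta>" "ereal \<beta> < Lit G"
  shows "\<not> T1 G \<subseteq> lp_space G \<beta>"
proof
  assume "T1 G \<subseteq> lp_space G \<beta>"
  with \<open>0 < \<beta>\<close> have "Lit G \<le> ereal \<beta>" unfolding Lit_def by (blast intro: Inf_lower)
  with assms(2) show False by simp
qed

theorem corollary1p8:
  fixes G :: "('a, 'b) monoid_scheme" and \<alpha> :: real
  assumes "group G" and "0 < \<alpha>" and "ereal \<alpha> < Lit G"
  shows "\<forall>N::nat. \<exists>S. finite S \<and> symmetric_set G S \<and> card S \<ge> N \<and>
           cay_colourable G S (real (card S) powr (1 / \<alpha>))"
proof
  fix N :: nat
  obtain \<beta> where "\<alpha> < \<beta>" "ereal \<beta> < Lit G" using ereal_dense2[OF assms(3)] by force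
  then obtain f where "f \<in> T1 G" "f \<notin> lp_space G \<beta>"
    using T1_not_subset_lp_space[of \<beta> G] \<open>0 < \<alpha>\<close> by auto
  then obtain f1 f2 B1 B2 where "T1_decomposition G f f1 f2 B1 B2"
    using T1_decomposition_exists \<open>group G\<close> by blast
  then interpret T1_decomposition G f f1 f2 B1 B2 .
  define C where "C = B1 + B2 + 1"
  define L where "L = 4 * (B1 + B2) + C"
  obtain \<epsilon> F where \<epsilon>: "0 < \<epsilon>" "\<epsilon> \<le> C"
    and F: "finite F" "F \<subseteq> carrier G" "\<forall>x\<in>F. \<epsilon> \<le> norm (f x)"
    and card_F: "real (N + 1) + (L / \<epsilon>) powr \<alpha> < real (card F)"
  proof (rule exists_large_superlevel_set[of "carrier G" "\<lambda>x. norm (f x)" C \<alpha> \<beta> L "N + 1"])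
    show "\<not> (\<lambda>x. norm (f x) powr \<beta>) summable_on carrier G"
      using \<open>f \<notin> lp_space G \<beta>\<close> by (simp add: lp_space_def)
    show "norm (f x) \<le> C" if "x \<in> carrier G" for x
      using norm_le_bounds[OF that] by (simp add: C_def)
  qed (use bounds_nonneg \<open>0 < \<alpha>\<close> \<open>\<alpha> < \<beta>\<close> in \<open>auto simp: C_def L_def\<close>)
  obtain S where S: "finite S" "symmetric_set G S" "card F \<le> card S + 1"
    and colourable: "cay_colourable G S (4 * (B1 + B2) / \<epsilon> + 1)"
    using colourable_symmetric_set_of_large_values[OF \<epsilon>(1) F] by blast
  have "real (card F) \<le> real (card S) + 1" using S(3) by linarith
  then have large_S: "(L / \<epsilon>) powr \<alpha> \<le> real (card S)" "real N < real (card S)"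
    using card_F powr_ge_zero[of "L / \<epsilon>" \<alpha>] by linarith+
  have "4 * (B1 + B2) / \<epsilon> + 1 \<le> L / \<epsilon>"
    using \<epsilon> by (simp add: L_def add_divide_distrib)
  with colourable have "cay_colourable G S (L / \<epsilon>)" by (rule cay_colourable_mono)
  then have "cay_colourable G S (real (card S) powr (1 / \<alpha>))"
    by (rule cay_colourable_powr)
      (use large_S(1) \<epsilon>(1) bounds_nonneg \<open>0 < \<alpha>\<close> in \<open>auto simp: L_def C_def\<close>)
  with S(1,2) large_S(2) show "\<exists>S. finite S \<and> symmetric_set G S \<and> card S \<ge> N \<and>
           cay_colourable G S (real (card S) powr (1 / \<alpha>))" by force
qed

end
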